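(* Let $n\ge1$. Suppose that to each ordered orthonormal basis $(v_1,\dots,v_{n+1})$ of $\mathbb{R}^{n+1}$ there is assigned a number $\epsilon=\epsilon(v_1,\dots,v_{n+1})>0$, and let $B_{v_1,\dots,v_{n+1}}=A_{v_1,\dots,v_{n+1},\epsilon(v_1,\dots,v_{n+1})}$. Then there is a finite collection $B_1,\dots,B_N$ of such sets, each of the form $B_{v_1,\dots,v_{n+1}}$, such that $\{x\in\mathbb{R}^{n+1}:|x|\le1\}\subset\bigcup_{i=1}^NB_i$.
   Context: For mutually orthogonal unit vectors $v_1,\dots,v_{n+1}\in\mathbb{R}^{n+1}$ and $\epsilon>0$, $A_{v_1,\dots,v_{n+1},\epsilon}=\{c_1v_1+\dots+c_{n+1}v_{n+1}: |c_1|\le1,\ |c_{i+1}|\le\epsilon|c_i|\text{ for all }1\le i\le n\}$. *)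

theory Defs
  imports "HOL-Analysis.Analysis"
begin

text \<open>An ordered orthonormal basis (v_1,...,v_{n+1}) of the ambient space, represented as a
list of length DIM('a) of mutually orthogonal unit vectors (list index i corresponds to v_{i+1}).\<close>
definition orthonormal_basis_list :: "'a::euclidean_space list \<Rightarrow> bool" where
  "orthonormal_basis_list vs \<longleftrightarrow> length vs = DIM('a) \<and>
     (\<forall>i<length vs. \<forall>j<length vs. vs ! i \<bullet> vs ! j = (if i = j then 1 else 0))"

definition A_set :: "'a::euclidean_space list \<Rightarrow> real \<Rightarrow> 'a set" where
  "A_set vs \<epsilon> = {(\<Sum>i<length vs. c i *\<^sub>R vs ! i) | c.
      \<bar>c 0\<bar> \<le> 1 \<and> (\<forall>i. Suc i < length vs \<longrightarrow> \<bar>c (Suc i)\<bar> \<le> \<epsilon> * \<bar>c i\<bar>)}"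

end

theory Submission
  imports Defs
begin

text \<open>Induction on the dimension of a subspace \<open>S\<close>. For a unit vector \<open>v \<in> S\<close>, the
  inductive hypothesis for \<open>v\<^sup>\<bottom> \<inter> S\<close> with the weights \<open>ws \<mapsto> \<epsilon>(v # ws)\<close> yields finitely many
  bases \<open>ws\<close> whose sets \<open>A\<^bsub>ws\<^esub>\<close> cover its unit ball. If \<open>\<delta>(v)\<close> is the least of the weights
  \<open>\<epsilon>(v # ws)\<close> involved, every \<open>x = c v + y\<close> of the unit ball with \<open>\<parallel>y\<parallel> \<le> \<delta>(v) \<bar>c\<bar>\<close> lies in some
  \<open>A\<^bsub>v # ws\<^esub>\<close>, because \<open>y / (\<delta>(v) \<bar>c\<bar>)\<close> lies in the unit ball of \<open>v\<^sup>\<bottom>\<close>. These cones have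
  nonempty interior around \<open>v\<close>, so by compactness finitely many of them cover the unit
  sphere of \<open>S\<close>, hence all of \<open>S\<close>.\<close>

definition orthonormal_basis_of :: "'a::euclidean_space set \<Rightarrow> 'a list \<Rightarrow> bool" where
  "orthonormal_basis_of S vs \<longleftrightarrow> length vs = dim S \<and> set vs \<subseteq> S \<and>
     (\<forall>i<length vs. \<forall>j<length vs. vs ! i \<bullet> vs ! j = (if i = j then 1 else 0))"

definition cone_around :: "'a::real_inner \<Rightarrow> real \<Rightarrow> 'a set" where
  "cone_around v \<delta> = {x. norm (x - (x \<bullet> v) *\<^sub>R v) \<le> \<delta> * \<bar>x \<bullet> v\<bar>}"

lemma orthonormal_basis_of_UNIV:
  "orthonormal_basis_of (UNIV :: 'a::euclidean_space set) vs \<longleftrightarrow> orthonormal_basis_list vs"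
  unfolding orthonormal_basis_of_def orthonormal_basis_list_def by (simp add: dim_UNIV)

lemma dim_orthogonal_hyperplane:
  fixes v :: "'a::euclidean_space"
  assumes "subspace S" "v \<in> S" "v \<noteq> 0"
  shows "dim {y\<in>S. v \<bullet> y = 0} + 1 = dim S"
proof -
  have "span {v} \<subseteq> S" using assms by (intro span_minimal) auto
  then have "dim {y \<in> S. \<forall>x \<in> span {v}. orthogonal x y} + dim (span {v}) = dim S"
    using dim_subspace_orthogonal_to_vectors[OF subspace_span assms(1)] by blast
  moreover have "{y \<in> S. \<forall>x \<in> span {v}. orthogonal x y} = {y\<in>S. v \<bullet> y = 0}"
    by (auto simp: span_singleton orthogonal_def)
  moreover have "dim (span {v}) = 1" using assms(3) by (simp add: dim_span dim_singleton)
  ultimately show ?thesis by simp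
qed

lemma orthonormal_basis_of_Cons:
  fixes v :: "'a::euclidean_space"
  assumes "subspace S" "v \<in> S" "norm v = 1"
    and "orthonormal_basis_of {y\<in>S. v \<bullet> y = 0} ws"
  shows "orthonormal_basis_of S (v # ws)"
proof -
  have ws: "length ws = dim {y\<in>S. v \<bullet> y = 0}" "set ws \<subseteq> S" "\<And>w. w \<in> set ws \<Longrightarrow> v \<bullet> w = 0"
    "\<And>i j. i < length ws \<Longrightarrow> j < length ws \<Longrightarrow> ws ! i \<bullet> ws ! j = (if i = j then 1 else 0)"
    using assms(4) unfolding orthonormal_basis_of_def by auto
  have vv: "v \<bullet> v = 1" using assms(3) by (simp add: dot_square_norm)
  have "(v # ws) ! i \<bullet> (v # ws) ! j = (if i = j then 1 else 0)"
    if "i < Suc (length ws)" "j < Suc (length ws)" for i j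
    using that vv ws(3)[OF nth_mem] ws(4)
    by (cases i; cases j) (auto simp: inner_commute)
  moreover have "dim S = Suc (length ws)"
    using dim_orthogonal_hyperplane[OF assms(1,2)] assms(3) ws(1) by fastforce
  ultimately show ?thesis
    unfolding orthonormal_basis_of_def using ws(2) assms(2) by auto
qed

lemma Cons_mem_A_set:
  assumes "z \<in> A_set ws e" "\<bar>c\<bar> \<le> 1" "0 \<le> \<delta>" "\<delta> \<le> e"
  shows "c *\<^sub>R v + (\<delta> * \<bar>c\<bar>) *\<^sub>R z \<in> A_set (v # ws) e"
proof -
  obtain d where z: "z = (\<Sum>i<length ws. d i *\<^sub>R ws ! i)" and "\<bar>d 0\<bar> \<le> 1"
    and d: "\<And>i. Suc i < length ws \<Longrightarrow> \<bar>d (Suc i)\<bar> \<le> e * \<bar>d i\<bar>"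
    using assms(1) unfolding A_set_def by blast
  define c' where "c' i = (if i = 0 then c else \<delta> * \<bar>c\<bar> * d (i - 1))" for i
  have "c *\<^sub>R v + (\<delta> * \<bar>c\<bar>) *\<^sub>R z = (\<Sum>i<length (v # ws). c' i *\<^sub>R (v # ws) ! i)"
    unfolding z
    by (simp only: length_Cons sum.lessThan_Suc_shift nth_Cons_0 nth_Cons_Suc)
       (simp add: c'_def scaleR_sum_right)
  moreover have "\<bar>c' (Suc i)\<bar> \<le> e * \<bar>c' i\<bar>" if "Suc i < length (v # ws)" for i
  proof (cases i)
    case 0
    have "\<delta> * \<bar>c\<bar> * \<bar>d 0\<bar> \<le> e * \<bar>c\<bar> * 1"
      using \<open>\<bar>d 0\<bar> \<le> 1\<close> assms(3,4) by (intro mult_mono) auto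
    then show ?thesis using 0 assms(3) by (simp add: c'_def abs_mult)
  next
    case (Suc j)
    have "\<delta> * \<bar>c\<bar> * \<bar>d (Suc j)\<bar> \<le> \<delta> * \<bar>c\<bar> * (e * \<bar>d j\<bar>)"
      using d[of j] that Suc assms(3) by (intro mult_left_mono) auto
    then show ?thesis using Suc assms(3) by (simp add: c'_def abs_mult mult_ac)
  qed
  moreover have "\<bar>c' 0\<bar> \<le> 1" using assms(2) by (simp add: c'_def)
  ultimately show ?thesis unfolding A_set_def by blast
qed

lemma zero_mem_cone_around: "0 \<in> cone_around v \<delta>"
  by (simp add: cone_around_def)

lemma scaleR_mem_cone_around:
  assumes "x \<in> cone_around v \<delta>" "t \<ge> 0"
  shows "t *\<^sub>R x \<in> cone_around v \<delta>"
proof -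
  have "t *\<^sub>R x - (t *\<^sub>R x \<bullet> v) *\<^sub>R v = t *\<^sub>R (x - (x \<bullet> v) *\<^sub>R v)"
    by (simp add: algebra_simps)
  then have "norm (t *\<^sub>R x - (t *\<^sub>R x \<bullet> v) *\<^sub>R v) = t * norm (x - (x \<bullet> v) *\<^sub>R v)"
    using assms(2) by simp
  also have "\<dots> \<le> t * (\<delta> * \<bar>x \<bullet> v\<bar>)"
    using assms unfolding cone_around_def by (intro mult_left_mono) auto
  also have "\<dots> = \<delta> * \<bar>t *\<^sub>R x \<bullet> v\<bar>" using assms(2) by (simp add: abs_mult)
  finally show ?thesis unfolding cone_around_def by simp
qed

text \<open>Compactness of the unit sphere of \<open>S\<close>, covered by the open cones
  \<open>\<parallel>x - (x \<bullet> v) v\<parallel> < \<delta> v \<bar>x \<bullet> v\<bar>\<close>; the origin lies in every cone and the rest of \<open>S\<close>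
  is reached by scaling.\<close>

lemma finite_cone_cover:
  fixes S :: "'a::euclidean_space set"
  assumes "subspace S" "S \<noteq> {0}" "\<And>v. v \<in> S \<Longrightarrow> norm v = 1 \<Longrightarrow> \<delta> v > 0"
  obtains T where "finite T" "T \<subseteq> S \<inter> sphere 0 1" "S \<subseteq> (\<Union>v\<in>T. cone_around v (\<delta> v))"
proof -
  define K where "K = S \<inter> sphere 0 1"
  define U where "U v = {x. norm (x - (x \<bullet> v) *\<^sub>R v) < \<delta> v * \<bar>x \<bullet> v\<bar>}" for v
  have open_U: "open (U v)" for v
    unfolding U_def by (intro open_Collect_less continuous_intros)
  have K_cover: "K \<subseteq> \<Union>(U ` K)"
  proof
    fix v assume "v \<in> K"
    then have "v \<in> U v" using assms(3) unfolding K_def U_def by (simp add: dot_square_norm)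
    with \<open>v \<in> K\<close> show "v \<in> \<Union>(U ` K)" by blast
  qed
  have "compact K"
    unfolding K_def Int_commute[of S]
    using compact_Int_closed[OF compact_sphere closed_subspace[OF assms(1)]] .
  then obtain T where T: "T \<subseteq> K" "finite T" "K \<subseteq> \<Union>(U ` T)"
    using compactE_image[OF _ open_U K_cover] by blast
  have "U v \<subseteq> cone_around v (\<delta> v)" for v
    unfolding U_def cone_around_def by auto
  then have UT: "u \<in> (\<Union>v\<in>T. cone_around v (\<delta> v))" if "u \<in> K" for u
    using T(3) that by blast
  obtain x0 where "x0 \<in> S" "x0 \<noteq> 0" using assms(2) subspace_0[OF assms(1)] by blast
  then have "x0 /\<^sub>R norm x0 \<in> K" unfolding K_def using assms(1) by (simp add: subspace_scale)
  then have "T \<noteq> {}" using UT by blast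
  have "x \<in> (\<Union>v\<in>T. cone_around v (\<delta> v))" if "x \<in> S" for x
  proof (cases "x = 0")
    case True
    then show ?thesis using \<open>T \<noteq> {}\<close> zero_mem_cone_around by blast
  next
    case False
    then have "x /\<^sub>R norm x \<in> K" unfolding K_def using that assms(1) by (simp add: subspace_scale)
    then obtain v where "v \<in> T" "x /\<^sub>R norm x \<in> cone_around v (\<delta> v)" using UT by blast
    then have "norm x *\<^sub>R (x /\<^sub>R norm x) \<in> cone_around v (\<delta> v)"
      using scaleR_mem_cone_around norm_ge_zero by blast
    with \<open>v \<in> T\<close> False show ?thesis by auto
  qed
  with T(1,2) show ?thesis using that unfolding K_def by blast
qed

lemma cone_subset_A_set_Cons:
  fixes v :: "'a::euclidean_space"
  assumes S: "subspace S" and "v \<in> S" "norm v = 1"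
    and cover: "cball 0 1 \<inter> {y\<in>S. v \<bullet> y = 0} \<subseteq> (\<Union>ws\<in>G. A_set ws (eps (v # ws)))"
    and "\<delta> > 0" "\<forall>ws\<in>G. \<delta> \<le> eps (v # ws)"
    and x: "x \<in> cball 0 1 \<inter> S" "x \<in> cone_around v \<delta>"
  shows "\<exists>ws\<in>G. x \<in> A_set (v # ws) (eps (v # ws))"
proof -
  define c where "c = x \<bullet> v"
  define y where "y = x - c *\<^sub>R v"
  define z where "z = (if c = 0 then 0 else (1 / (\<delta> * \<bar>c\<bar>)) *\<^sub>R y)"
  have "\<bar>c\<bar> \<le> 1"
    using Cauchy_Schwarz_ineq2[of x v] x(1) assms(3) unfolding c_def by auto
  have y_le: "norm y \<le> \<delta> * \<bar>c\<bar>" using x(2) unfolding cone_around_def y_def c_def by simp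
  have x_eq: "x = c *\<^sub>R v + (\<delta> * \<bar>c\<bar>) *\<^sub>R z"
  proof (cases "c = 0")
    case True
    then show ?thesis using y_le unfolding z_def y_def by simp
  next
    case False
    then show ?thesis using \<open>\<delta> > 0\<close> unfolding z_def y_def by simp
  qed
  have "norm z \<le> 1"
    using y_le \<open>\<delta> > 0\<close> by (simp add: z_def field_simps)
  moreover have "z \<in> S"
    unfolding z_def y_def using S x(1) assms(2) by (simp add: subspace_diff subspace_scale subspace_0)
  moreover have "v \<bullet> z = 0"
    using assms(3) by (simp add: z_def y_def c_def inner_diff_right inner_commute dot_square_norm)
  ultimately obtain ws where "ws \<in> G" "z \<in> A_set ws (eps (v # ws))"
    using cover by force
  moreover have "\<delta> \<le> eps (v # ws)" using assms(6) \<open>ws \<in> G\<close> by blast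
  ultimately show ?thesis
    using Cons_mem_A_set[of z ws _ c \<delta> v] \<open>\<bar>c\<bar> \<le> 1\<close> \<open>\<delta> > 0\<close> x_eq by auto
qed

lemma cball_inter_subspace_covered_from_hyperplanes:
  fixes S :: "'a::euclidean_space set"
  assumes S: "subspace S" "S \<noteq> {0}"
    and eps_pos: "\<And>vs. orthonormal_basis_of S vs \<Longrightarrow> eps vs > 0"
    and G_finite: "\<And>v. v \<in> S \<Longrightarrow> norm v = 1 \<Longrightarrow> finite (G v)"
    and G_basis: "\<And>v ws. v \<in> S \<Longrightarrow> norm v = 1 \<Longrightarrow> ws \<in> G v \<Longrightarrow>
      orthonormal_basis_of {y\<in>S. v \<bullet> y = 0} ws"
    and G_cover: "\<And>v. v \<in> S \<Longrightarrow> norm v = 1 \<Longrightarrow>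
      cball 0 1 \<inter> {y\<in>S. v \<bullet> y = 0} \<subseteq> (\<Union>ws\<in>G v. A_set ws (eps (v # ws)))"
  shows "\<exists>F. finite F \<and> F \<subseteq> {vs. orthonormal_basis_of S vs} \<and>
           cball 0 1 \<inter> S \<subseteq> (\<Union>vs\<in>F. A_set vs (eps vs))"
proof -
  have basis_Cons: "orthonormal_basis_of S (v # ws)" if "v \<in> S" "norm v = 1" "ws \<in> G v" for v ws
    using orthonormal_basis_of_Cons[OF S(1) that(1,2) G_basis[OF that]] .
  define \<delta> where "\<delta> v = Min (insert 1 ((\<lambda>ws. eps (v # ws)) ` G v))" for v
  have \<delta>_pos: "\<delta> v > 0" if "v \<in> S" "norm v = 1" for v
    unfolding \<delta>_def using G_finite[OF that] basis_Cons[OF that] eps_pos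
    by (subst Min_gr_iff) auto
  have \<delta>_le: "\<forall>ws\<in>G v. \<delta> v \<le> eps (v # ws)" if "v \<in> S" "norm v = 1" for v
    unfolding \<delta>_def using G_finite[OF that] by auto
  obtain T where T: "finite T" "T \<subseteq> S \<inter> sphere 0 1"
      "S \<subseteq> (\<Union>v\<in>T. cone_around v (\<delta> v))"
    by (rule finite_cone_cover[OF S \<delta>_pos])
  have T_unit: "v \<in> S" "norm v = 1" if "v \<in> T" for v
    using T(2) that by auto
  define F where "F = (\<Union>v\<in>T. (\<lambda>ws. v # ws) ` G v)"
  have "finite F" unfolding F_def using T(1) G_finite T_unit by auto
  moreover have "F \<subseteq> {vs. orthonormal_basis_of S vs}"
    unfolding F_def using basis_Cons T_unit by auto
  moreover have "cball 0 1 \<inter> S \<subseteq> (\<Union>vs\<in>F. A_set vs (eps vs))"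
  proof
    fix x assume x: "x \<in> cball 0 1 \<inter> S"
    then obtain v where v: "v \<in> T" "x \<in> cone_around v (\<delta> v)" using T(3) by blast
    then obtain ws where "ws \<in> G v" "x \<in> A_set (v # ws) (eps (v # ws))"
      using cone_subset_A_set_Cons[OF S(1) T_unit[OF v(1)] G_cover _ _ x v(2)]
        \<delta>_pos \<delta>_le T_unit[OF v(1)] by blast
    then show "x \<in> (\<Union>vs\<in>F. A_set vs (eps vs))" unfolding F_def using v(1) by blast
  qed
  ultimately show ?thesis by blast
qed

lemma cball_inter_subspace_covered_by_A_sets:
  fixes S :: "'a::euclidean_space set"
  assumes "subspace S" "\<And>vs. orthonormal_basis_of S vs \<Longrightarrow> eps vs > 0"
  shows "\<exists>F. finite F \<and> F \<subseteq> {vs. orthonormal_basis_of S vs} \<and>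
           cball 0 1 \<inter> S \<subseteq> (\<Union>vs\<in>F. A_set vs (eps vs))"
  using assms
proof (induction "dim S" arbitrary: S eps)
  case 0
  then have "S \<subseteq> {0}" using dim_eq_0 by metis
  moreover have "orthonormal_basis_of S []" using 0 by (simp add: orthonormal_basis_of_def)
  moreover have "0 \<in> A_set [] (eps [])" unfolding A_set_def by (auto intro!: exI[of _ "\<lambda>_. 0"])
  ultimately show ?case by (intro exI[of _ "{[]}"]) auto
next
  case (Suc k)
  note S = \<open>subspace S\<close>
  define P where "P v = {y\<in>S. v \<bullet> y = 0}" for v
  have "\<exists>G. finite G \<and> G \<subseteq> {ws. orthonormal_basis_of (P v) ws} \<and>
           cball 0 1 \<inter> P v \<subseteq> (\<Union>ws\<in>G. A_set ws (eps (v # ws)))"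
    if "v \<in> S" "norm v = 1" for v
  proof (rule Suc.hyps)
    show "subspace (P v)"
      unfolding P_def using S by (auto simp: subspace_def inner_add_right)
    show "k = dim (P v)"
      using dim_orthogonal_hyperplane[OF S that(1)] that(2) Suc.hyps(2) unfolding P_def by force
    show "eps (v # ws) > 0" if "orthonormal_basis_of (P v) ws" for ws
      using Suc.prems(2) orthonormal_basis_of_Cons[OF S \<open>v \<in> S\<close> \<open>norm v = 1\<close>] that
      unfolding P_def by blast
  qed
  then obtain G where G: "\<And>v. v \<in> S \<Longrightarrow> norm v = 1 \<Longrightarrow> finite (G v) \<and>
      G v \<subseteq> {ws. orthonormal_basis_of (P v) ws} \<and>
      cball 0 1 \<inter> P v \<subseteq> (\<Union>ws\<in>G v. A_set ws (eps (v # ws)))"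
    by metis
  have "S \<noteq> {0}" using Suc.hyps(2) by (metis dim_eq_0 nat.distinct(1) order_refl)
  then show ?case
  proof (rule cball_inter_subspace_covered_from_hyperplanes[OF S _ Suc.prems(2)])
    fix v assume v: "v \<in> S" "norm v = 1"
    show "finite (G v)" using G[OF v] by blast
    show "orthonormal_basis_of {y\<in>S. v \<bullet> y = 0} ws" if "ws \<in> G v" for ws
      using G[OF v] that unfolding P_def by blast
    show "cball 0 1 \<inter> {y\<in>S. v \<bullet> y = 0} \<subseteq> (\<Union>ws\<in>G v. A_set ws (eps (v # ws)))"
      using G[OF v] unfolding P_def by blast
  qed
qed

theorem lemma2p4:
  fixes eps :: "'a::euclidean_space list \<Rightarrow> real"
  assumes "DIM('a) \<ge> 2"
    and "\<And>vs. orthonormal_basis_list vs \<Longrightarrow> eps vs > 0"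
  shows "\<exists>F. finite F \<and> F \<subseteq> {vs. orthonormal_basis_list vs} \<and>
           cball (0::'a) 1 \<subseteq> (\<Union>vs\<in>F. A_set vs (eps vs))"
  using cball_inter_subspace_covered_by_A_sets[of UNIV eps] assms(2)
  by (simp add: orthonormal_basis_of_UNIV)

end
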